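(* Every self-similar tree $T$ admits a rigid structure. That is, there is a family $\{\varphi_{vw}\}$ consisting of one morphism $\varphi_{vw}\in\mathrm{Mor}(v,w)$ for each ordered pair $(v,w)$ of vertices of $T$ of the same type, satisfying two conditions: (1) $\varphi_{vw}\circ\varphi_{uv}=\varphi_{uw}$ for all triples $u,v,w$ of the same type; (2) whenever $v'$ is a descendant of $v$ and $w'=\varphi_{vw}(v')$, the morphism $\varphi_{v'w'}$ is the restriction of $\varphi_{vw}$ to $T_{v'}$.
   Context: A self-similar tree is a locally finite rooted tree $T$ (identified with its vertex set) with a partition of the vertices into finitely many types, and for each pair $u,v$ of same-type vertices a nonempty finite set $\mathrm{Mor}(u,v)$ of rooted tree isomorphisms $T_u\to T_v$ (morphisms) preserving types, where $T_v$ is the subtree of $v$ and its descendants. The morphisms satisfy: (a) inverses of morphisms are morphisms; (b) compositions $\psi\varphi$ with $\varphi\in\mathrm{Mor}(u,v)$, $\psi\in\mathrm{Mor}(v,w)$ lie in $\mathrm{Mor}(u,w)$; (c) restrictions of a morphism $\varphi\in\mathrm{Mor}(v,w)$ to $T_u$, $u\in T_v$, lie in $\mathrm{Mor}(u,\varphi(u))$. *)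

theory Defs
  imports "HOL-Library.FuncSet"
begin

definition rooted_tree :: "'v set \<Rightarrow> 'v \<Rightarrow> ('v \<Rightarrow> 'v) \<Rightarrow> bool" where
  "rooted_tree V r p \<longleftrightarrow> r \<in> V \<and> p r = r \<and> (\<forall>u\<in>V - {r}. p u \<in> V)
     \<and> (\<forall>u\<in>V. \<exists>n. (p ^^ n) u = r)"

definition locally_finite_tree :: "'v set \<Rightarrow> 'v \<Rightarrow> ('v \<Rightarrow> 'v) \<Rightarrow> bool" where
  "locally_finite_tree V r p \<longleftrightarrow> rooted_tree V r p
     \<and> (\<forall>v\<in>V. finite {u\<in>V. u \<noteq> r \<and> p u = v})"

definition subtree :: "'v set \<Rightarrow> ('v \<Rightarrow> 'v) \<Rightarrow> 'v \<Rightarrow> 'v set" where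
  "subtree V p v = {u\<in>V. \<exists>n. (p ^^ n) u = v}"

definition rooted_iso :: "'v set \<Rightarrow> ('v \<Rightarrow> 'v) \<Rightarrow> 'v \<Rightarrow> 'v \<Rightarrow> ('v \<Rightarrow> 'v) \<Rightarrow> bool" where
  "rooted_iso V p u v f \<longleftrightarrow> f \<in> extensional (subtree V p u)
     \<and> bij_betw f (subtree V p u) (subtree V p v) \<and> f u = v
     \<and> (\<forall>x\<in>subtree V p u - {u}. f (p x) = p (f x))"

definition self_similar_tree ::
  "'v set \<Rightarrow> 'v \<Rightarrow> ('v \<Rightarrow> 'v) \<Rightarrow> ('v \<Rightarrow> 't) \<Rightarrow> ('v \<Rightarrow> 'v \<Rightarrow> ('v \<Rightarrow> 'v) set) \<Rightarrow> bool" where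
  "self_similar_tree V r p tp Mor \<longleftrightarrow>
     locally_finite_tree V r p \<and> finite (tp ` V)
   \<and> (\<forall>u\<in>V. \<forall>v\<in>V. tp u = tp v \<longrightarrow>
        finite (Mor u v) \<and> Mor u v \<noteq> {}
        \<and> (\<forall>f\<in>Mor u v. rooted_iso V p u v f \<and> (\<forall>x\<in>subtree V p u. tp (f x) = tp x)))
   \<and> (\<forall>u\<in>V. \<forall>v\<in>V. tp u = tp v \<longrightarrow> (\<forall>f\<in>Mor u v.
        restrict (inv_into (subtree V p u) f) (subtree V p v) \<in> Mor v u))
   \<and> (\<forall>u\<in>V. \<forall>v\<in>V. \<forall>w\<in>V. tp u = tp v \<and> tp v = tp w \<longrightarrow>
        (\<forall>f\<in>Mor u v. \<forall>g\<in>Mor v w. compose (subtree V p u) g f \<in> Mor u w))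
   \<and> (\<forall>v\<in>V. \<forall>w\<in>V. tp v = tp w \<longrightarrow> (\<forall>f\<in>Mor v w. \<forall>u\<in>subtree V p v.
        restrict f (subtree V p u) \<in> Mor u (f u)))"

end

theory Submission
  imports Defs
begin

text \<open>Fix a representative vertex of every type and, for every vertex y, some morphism from
  T_y onto the representative of its type. Going down the tree, define a chart of every T_v
  onto the representative subtree: the chart of the root is the chosen morphism, and the chart
  of a child v is the chart of its parent restricted to T_v, followed by the chosen morphism at
  the image of v. By induction along paths, the charts of two vertices of the same type
  determine each other below any pair of matched vertices; hence the morphisms
  \<phi>_vw = (chart w)\<inverse> \<circ> chart v are compatible with composition and with restriction.\<close>

lemma subtree_in_V: "x \<in> subtree V p u \<Longrightarrow> x \<in> V"
  by (auto simp: subtree_def)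

lemma self_in_subtree: "u \<in> V \<Longrightarrow> u \<in> subtree V p u"
  unfolding subtree_def by (auto intro: exI[of _ 0])

lemma in_subtree_parent: "v \<in> V \<Longrightarrow> v \<in> subtree V p (p v)"
  unfolding subtree_def by (auto intro: exI[of _ 1])

lemma subtree_trans: "x \<in> subtree V p u \<Longrightarrow> subtree V p x \<subseteq> subtree V p u"
proof
  fix z assume "x \<in> subtree V p u" "z \<in> subtree V p x"
  then obtain n m where "(p ^^ n) x = u" "(p ^^ m) z = x" "z \<in> V"
    unfolding subtree_def by auto
  then have "(p ^^ (n + m)) z = u" by (simp add: funpow_add)
  with \<open>z \<in> V\<close> show "z \<in> subtree V p u" unfolding subtree_def by auto
qed

locale self_similar =
  fixes V :: "'v set" and r :: 'v and p :: "'v \<Rightarrow> 'v" and tp :: "'v \<Rightarrow> 't"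
    and Mor :: "'v \<Rightarrow> 'v \<Rightarrow> ('v \<Rightarrow> 'v) set"
  assumes self_similar_tree: "self_similar_tree V r p tp Mor"
begin

abbreviation T :: "'v \<Rightarrow> 'v set" where "T v \<equiv> subtree V p v"

lemma root_in_V: "r \<in> V"
  and parent_root: "p r = r"
  and parent_in_V_nonroot: "u \<in> V \<Longrightarrow> u \<noteq> r \<Longrightarrow> p u \<in> V"
  and reaches_root: "u \<in> V \<Longrightarrow> \<exists>n. (p ^^ n) u = r"
  using self_similar_tree
  unfolding self_similar_tree_def locally_finite_tree_def rooted_tree_def by auto

lemma parent_in_V: "u \<in> V \<Longrightarrow> p u \<in> V"
  using root_in_V parent_root parent_in_V_nonroot by (cases "u = r") auto

lemma mor_nonempty: "u \<in> V \<Longrightarrow> v \<in> V \<Longrightarrow> tp u = tp v \<Longrightarrow> Mor u v \<noteq> {}"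
  using self_similar_tree unfolding self_similar_tree_def by blast

lemma mor_inverse: "u \<in> V \<Longrightarrow> v \<in> V \<Longrightarrow> tp u = tp v \<Longrightarrow> f \<in> Mor u v \<Longrightarrow>
    restrict (inv_into (T u) f) (T v) \<in> Mor v u"
  using self_similar_tree unfolding self_similar_tree_def by blast

lemma mor_compose: "u \<in> V \<Longrightarrow> v \<in> V \<Longrightarrow> w \<in> V \<Longrightarrow> tp u = tp v \<Longrightarrow> tp v = tp w \<Longrightarrow>
    f \<in> Mor u v \<Longrightarrow> g \<in> Mor v w \<Longrightarrow> compose (T u) g f \<in> Mor u w"
  using self_similar_tree unfolding self_similar_tree_def by blast

lemma mor_restrict: "v \<in> V \<Longrightarrow> w \<in> V \<Longrightarrow> tp v = tp w \<Longrightarrow> f \<in> Mor v w \<Longrightarrow> u \<in> T v \<Longrightarrow>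
    restrict f (T u) \<in> Mor u (f u)"
  using self_similar_tree unfolding self_similar_tree_def by blast

lemma parent_in_subtree:
  assumes "x \<in> T u" "x \<noteq> u" shows "p x \<in> T u"
proof -
  obtain n where n: "(p ^^ n) x = u" "x \<in> V" using assms(1) unfolding subtree_def by auto
  with assms(2) obtain m where "n = Suc m" by (cases n) auto
  with n have "(p ^^ m) (p x) = u" by (simp only: funpow_Suc_right comp_apply)
  with parent_in_V[OF n(2)] show ?thesis unfolding subtree_def by auto
qed

lemma root_in_subtree: "r \<in> T u \<Longrightarrow> u = r"
proof -
  have "(p ^^ n) r = r" for n by (induction n) (simp_all add: parent_root)
  then show "r \<in> T u \<Longrightarrow> u = r" unfolding subtree_def by auto
qed

context
  fixes u v f
  assumes mor: "u \<in> V" "v \<in> V" "tp u = tp v" "f \<in> Mor u v"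
begin

lemma mor_rooted_iso: "rooted_iso V p u v f"
  and mor_type: "x \<in> T u \<Longrightarrow> tp (f x) = tp x"
  using self_similar_tree mor unfolding self_similar_tree_def by blast+

lemma mor_bij: "bij_betw f (T u) (T v)"
  and mor_root: "f u = v"
  and mor_parent: "x \<in> T u \<Longrightarrow> x \<noteq> u \<Longrightarrow> f (p x) = p (f x)"
  using mor_rooted_iso unfolding rooted_iso_def by auto

lemma mor_inj: "inj_on f (T u)"
  using mor_bij by (rule bij_betw_imp_inj_on)

lemma mor_into: "x \<in> T u \<Longrightarrow> f x \<in> T v"
  using mor_bij by (auto simp: bij_betw_def)

end

lemma mor_into_subtree:
  assumes "u \<in> V" "v \<in> V" "tp u = tp v" "f \<in> Mor u v" "x \<in> T u" "z \<in> T x"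
  shows "f z \<in> T (f x)"
proof -
  have x: "x \<in> V" "f x \<in> V" "tp x = tp (f x)"
    using assms(5) subtree_in_V mor_into[OF assms(1-5)] mor_type[OF assms(1-5)] by auto
  have "restrict f (T x) \<in> Mor x (f x)" using mor_restrict[OF assms(1-5)] .
  from mor_into[OF x this assms(6)] assms(6) show ?thesis by simp
qed

definition depth :: "'v \<Rightarrow> nat" where
  "depth v = (LEAST n. (p ^^ n) v = r)"

lemma depth_nonroot:
  assumes "v \<in> V" "v \<noteq> r" shows "depth v = Suc (depth (p v))"
proof -
  obtain n where "(p ^^ n) v = r" using reaches_root assms(1) by blast
  then have "depth v = Suc (LEAST m. (p ^^ Suc m) v = r)"
    unfolding depth_def by (rule Least_Suc) (simp add: assms(2))
  then show ?thesis unfolding depth_def by (simp only: funpow_Suc_right comp_apply)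
qed

definition rep :: "'t \<Rightarrow> 'v" where
  "rep t = (SOME c. c \<in> V \<and> tp c = t)"

lemma rep_of_type: "v \<in> V \<Longrightarrow> rep (tp v) \<in> V \<and> tp (rep (tp v)) = tp v"
  unfolding rep_def by (rule someI) auto

definition to_rep :: "'v \<Rightarrow> 'v \<Rightarrow> 'v" where
  "to_rep y = (SOME f. f \<in> Mor y (rep (tp y)))"

lemma to_rep_mor:
  assumes "y \<in> V" shows "to_rep y \<in> Mor y (rep (tp y))"
proof -
  have "Mor y (rep (tp y)) \<noteq> {}" using mor_nonempty assms rep_of_type[OF assms] by simp
  then have "\<exists>f. f \<in> Mor y (rep (tp y))" by blast
  then show ?thesis unfolding to_rep_def by (rule someI_ex)
qed

primrec chart_at :: "nat \<Rightarrow> 'v \<Rightarrow> 'v \<Rightarrow> 'v" where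
  "chart_at 0 v = to_rep v"
| "chart_at (Suc n) v =
     compose (T v) (to_rep (chart_at n (p v) v)) (restrict (chart_at n (p v)) (T v))"

definition chart :: "'v \<Rightarrow> 'v \<Rightarrow> 'v" where
  "chart v = chart_at (depth v) v"

lemma chart_nonroot:
  "v \<in> V \<Longrightarrow> v \<noteq> r \<Longrightarrow>
    chart v = compose (T v) (to_rep (chart (p v) v)) (restrict (chart (p v)) (T v))"
  unfolding chart_def by (simp add: depth_nonroot)

lemma chart_nonroot_apply:
  "v \<in> V \<Longrightarrow> v \<noteq> r \<Longrightarrow> z \<in> T v \<Longrightarrow> chart v z = to_rep (chart (p v) v) (chart (p v) z)"
  by (simp add: chart_nonroot compose_def)

lemma chart_mor: "v \<in> V \<Longrightarrow> chart v \<in> Mor v (rep (tp v))"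
proof (induction "depth v" arbitrary: v)
  case 0
  then show ?case by (simp add: chart_def to_rep_mor)
next
  case (Suc n)
  have "v \<noteq> r"
    using Suc.hyps(2) by (auto simp: depth_def)
  with Suc.prems have u: "p v \<in> V" "depth (p v) = n"
    using parent_in_V depth_nonroot Suc.hyps(2) by simp_all
  define c where "c = rep (tp (p v))"
  have c: "c \<in> V" "tp (p v) = tp c" using rep_of_type[OF u(1)] c_def by simp_all
  have F: "chart (p v) \<in> Mor (p v) c" using Suc.hyps(1)[OF u(2)[symmetric] u(1)] c_def by simp
  have vp: "v \<in> T (p v)" using in_subtree_parent Suc.prems .
  define y where "y = chart (p v) v"
  have y: "y \<in> V" "tp v = tp y"
    using mor_into[OF u(1) c F vp] subtree_in_V mor_type[OF u(1) c F vp] y_def by auto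
  have R: "restrict (chart (p v)) (T v) \<in> Mor v y"
    using mor_restrict[OF u(1) c F vp] y_def by simp
  have G: "to_rep y \<in> Mor y (rep (tp v))" using to_rep_mor[OF y(1)] y(2) by simp
  have cv: "rep (tp v) \<in> V" "tp y = tp (rep (tp v))" using rep_of_type[OF Suc.prems] y(2) by auto
  have "compose (T v) (to_rep y) (restrict (chart (p v)) (T v)) \<in> Mor v (rep (tp v))"
    by (rule mor_compose[OF Suc.prems y(1) cv(1) y(2) cv(2) R G])
  then show ?case using chart_nonroot[OF Suc.prems \<open>v \<noteq> r\<close>] y_def by simp
qed

lemma
  assumes v: "v \<in> V"
  shows chart_root: "chart v v = rep (tp v)"
    and chart_bij: "bij_betw (chart v) (T v) (T (rep (tp v)))"
    and chart_inj: "inj_on (chart v) (T v)"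
    and chart_into: "z \<in> T v \<Longrightarrow> chart v z \<in> T (rep (tp v))"
    and chart_parent: "x \<in> T v \<Longrightarrow> x \<noteq> v \<Longrightarrow> chart v (p x) = p (chart v x)"
proof -
  have "rep (tp v) \<in> V" "tp v = tp (rep (tp v))" using rep_of_type[OF v] by auto
  note chart = v this chart_mor[OF v]
  show "chart v v = rep (tp v)" by (rule mor_root[OF chart])
  show "bij_betw (chart v) (T v) (T (rep (tp v)))" by (rule mor_bij[OF chart])
  show "inj_on (chart v) (T v)" by (rule mor_inj[OF chart])
  show "z \<in> T v \<Longrightarrow> chart v z \<in> T (rep (tp v))" by (rule mor_into[OF chart])
  show "x \<in> T v \<Longrightarrow> x \<noteq> v \<Longrightarrow> chart v (p x) = p (chart v x)" by (rule mor_parent[OF chart])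
qed

lemma chart_eq_rep_iff: "v \<in> V \<Longrightarrow> x \<in> T v \<Longrightarrow> chart v x = rep (tp v) \<longleftrightarrow> x = v"
  using chart_root chart_inj self_in_subtree by (metis inj_onD)

lemma chart_eq_below_matched:
  assumes v: "v \<in> V" and w: "w \<in> V" and vw: "tp v = tp w"
    and "v' \<in> T v" "w' \<in> T w" "chart v v' = chart w w'"
    and "z \<in> T v'" "z' \<in> T w'" "chart v z = chart w z'"
  shows "chart v' z = chart w' z'"
proof -
  have at_v: "chart v' z = chart w' z'"
    if "v' = v" "w' \<in> T w" "chart v v' = chart w w'" "chart v z = chart w z'" for v' w' z z'
  proof -
    have "chart w w' = rep (tp w)" using that(1,3) chart_root[OF v] vw by simp
    then have "w' = w" using chart_eq_rep_iff[OF w that(2)] by simp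
    with that show ?thesis by simp
  qed
  obtain n where "(p ^^ n) v' = v" using assms(4) unfolding subtree_def by blast
  then show ?thesis using assms(4-9)
  proof (induction n arbitrary: v' w' z z')
    case 0
    then show ?case using at_v by simp
  next
    case (Suc n)
    show ?case
    proof (cases "v' = v")
      case True
      then show ?thesis using at_v Suc.prems by blast
    next
      case False
      have "w' \<noteq> w"
      proof
        assume "w' = w"
        then have "chart v v' = rep (tp v)" using Suc.prems(4) chart_root[OF w] vw by simp
        with False show False using chart_eq_rep_iff[OF v Suc.prems(2)] by simp
      qed
      have v': "v' \<in> V" "v' \<noteq> r" and w': "w' \<in> V" "w' \<noteq> r"
        using subtree_in_V[OF Suc.prems(2)] subtree_in_V[OF Suc.prems(3)]
          root_in_subtree[of v] root_in_subtree[of w] Suc.prems(2,3) False \<open>w' \<noteq> w\<close> by auto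
      have n: "(p ^^ n) (p v') = v"
        using Suc.prems(1) by (simp only: funpow_Suc_right comp_apply)
      have parents: "p v' \<in> T v" "p w' \<in> T w"
        using parent_in_subtree Suc.prems(2,3) False \<open>w' \<noteq> w\<close> by auto
      have parents_matched: "chart v (p v') = chart w (p w')"
        using chart_parent[OF v Suc.prems(2) False] chart_parent[OF w Suc.prems(3) \<open>w' \<noteq> w\<close>]
          Suc.prems(4) by simp
      have up: "v' \<in> T (p v')" "w' \<in> T (p w')"
        by (simp_all add: in_subtree_parent v'(1) w'(1))
      have below: "z \<in> T (p v')" "z' \<in> T (p w')"
        using subtree_trans[OF up(1)] subtree_trans[OF up(2)] Suc.prems(5,6) by auto
      note IH = Suc.IH[OF n parents parents_matched]
      have "chart (p v') v' = chart (p w') w'" "chart (p v') z = chart (p w') z'"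
        using IH[OF up Suc.prems(4)] IH[OF below Suc.prems(7)] by simp_all
      then show ?thesis
        using chart_nonroot_apply[OF v' Suc.prems(5)] chart_nonroot_apply[OF w' Suc.prems(6)]
        by simp
    qed
  qed
qed

definition chart_inv :: "'v \<Rightarrow> 'v \<Rightarrow> 'v" where
  "chart_inv w = restrict (inv_into (T w) (chart w)) (T (rep (tp w)))"

definition rigid :: "'v \<Rightarrow> 'v \<Rightarrow> 'v \<Rightarrow> 'v" where
  "rigid v w = compose (T v) (chart_inv w) (chart v)"

lemma chart_inv_mor:
  assumes w: "w \<in> V" shows "chart_inv w \<in> Mor (rep (tp w)) w"
proof -
  have "rep (tp w) \<in> V" "tp w = tp (rep (tp w))" using rep_of_type[OF w] by auto
  then show ?thesis unfolding chart_inv_def by (rule mor_inverse[OF w _ _ chart_mor[OF w]])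
qed

lemma rigid_mor:
  assumes v: "v \<in> V" and w: "w \<in> V" and vw: "tp v = tp w"
  shows "rigid v w \<in> Mor v w"
proof -
  have c: "rep (tp v) \<in> V" "tp v = tp (rep (tp v))" "tp (rep (tp v)) = tp w"
    using rep_of_type[OF v] vw by auto
  have "chart_inv w \<in> Mor (rep (tp v)) w" using chart_inv_mor[OF w] vw by simp
  then show ?thesis
    unfolding rigid_def by (rule mor_compose[OF v c(1) w c(2,3) chart_mor[OF v]])
qed

lemma rigid_outside: "z \<notin> T v \<Longrightarrow> rigid v w z = undefined"
  by (simp add: rigid_def compose_def)

lemma rigid_eq_iff:
  assumes v: "v \<in> V" and w: "w \<in> V" and vw: "tp v = tp w"
    and z: "z \<in> T v" and z': "z' \<in> T w"
  shows "rigid v w z = z' \<longleftrightarrow> chart v z = chart w z'"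
proof -
  have a: "chart v z \<in> T (rep (tp w))" using chart_into[OF v z] vw by simp
  have "rigid v w z = inv_into (T w) (chart w) (chart v z)"
    using z a by (simp add: rigid_def chart_inv_def compose_def)
  moreover have "inv_into (T w) (chart w) (chart v z) \<in> T w"
    "chart w (inv_into (T w) (chart w) (chart v z)) = chart v z"
    using a chart_bij[OF w] by (auto simp: bij_betw_def intro: inv_into_into f_inv_into_f)
  ultimately show ?thesis using chart_inj[OF w] z' by (metis inj_onD)
qed

lemma rigid_compose:
  assumes "u \<in> V" "v \<in> V" "w \<in> V" "tp u = tp v" "tp v = tp w"
  shows "compose (T u) (rigid v w) (rigid u v) = rigid u w"
proof
  fix z
  show "compose (T u) (rigid v w) (rigid u v) z = rigid u w z"
  proof (cases "z \<in> T u")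
    case True
    define y where "y = rigid u v z"
    have y: "y \<in> T v" "chart u z = chart v y"
      using mor_into[OF assms(1,2,4) rigid_mor[OF assms(1,2,4)] True]
        rigid_eq_iff[OF assms(1,2,4) True] y_def by auto
    have "rigid v w y \<in> T w" "chart v y = chart w (rigid v w y)"
      using mor_into[OF assms(2,3,5) rigid_mor[OF assms(2,3,5)] y(1)]
        rigid_eq_iff[OF assms(2,3,5) y(1)] by auto
    then have "rigid u w z = rigid v w y"
      using rigid_eq_iff[OF assms(1,3) _ True] assms(4,5) y(2) by simp
    then show ?thesis using True y_def by (simp add: compose_def)
  next
    case False
    then show ?thesis by (simp add: compose_def rigid_outside)
  qed
qed

lemma rigid_restrict:
  assumes v: "v \<in> V" and w: "w \<in> V" and vw: "tp v = tp w" and v': "v' \<in> T v"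
  shows "rigid v' (rigid v w v') = restrict (rigid v w) (T v')"
proof
  fix z
  define w' where "w' = rigid v w v'"
  note \<phi> = v w vw rigid_mor[OF v w vw]
  have w': "w' \<in> T w" "tp v' = tp w'" "chart v v' = chart w w'"
    using mor_into[OF \<phi> v'] mor_type[OF \<phi> v'] rigid_eq_iff[OF v w vw v'] w'_def by auto
  have V: "v' \<in> V" "w' \<in> V" using subtree_in_V[OF v'] subtree_in_V[OF w'(1)] by simp_all
  show "rigid v' w' z = restrict (rigid v w) (T v') z"
  proof (cases "z \<in> T v'")
    case True
    define z' where "z' = rigid v w z"
    have zv: "z \<in> T v" using subtree_trans[OF v'] True by auto
    have z': "z' \<in> T w'" "chart v z = chart w z'"
      using mor_into_subtree[OF \<phi> v' True] mor_into[OF \<phi> zv] rigid_eq_iff[OF v w vw zv]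
        z'_def w'_def by auto
    have "chart v' z = chart w' z'"
      by (rule chart_eq_below_matched[OF v w vw v' w'(1,3) True z'])
    then have "rigid v' w' z = z'" using rigid_eq_iff[OF V w'(2) True z'(1)] by simp
    then show ?thesis using True z'_def by simp
  next
    case False
    then show ?thesis by (simp add: rigid_outside)
  qed
qed

end

theorem mainTheorem11:
  fixes V :: "'v set" and r :: 'v and p :: "'v \<Rightarrow> 'v" and tp :: "'v \<Rightarrow> 't"
    and Mor :: "'v \<Rightarrow> 'v \<Rightarrow> ('v \<Rightarrow> 'v) set"
  assumes "self_similar_tree V r p tp Mor"
  shows "\<exists>\<phi> :: 'v \<Rightarrow> 'v \<Rightarrow> ('v \<Rightarrow> 'v).
     (\<forall>v\<in>V. \<forall>w\<in>V. tp v = tp w \<longrightarrow> \<phi> v w \<in> Mor v w)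
   \<and> (\<forall>u\<in>V. \<forall>v\<in>V. \<forall>w\<in>V. tp u = tp v \<and> tp v = tp w \<longrightarrow>
        compose (subtree V p u) (\<phi> v w) (\<phi> u v) = \<phi> u w)
   \<and> (\<forall>v\<in>V. \<forall>w\<in>V. tp v = tp w \<longrightarrow> (\<forall>v'\<in>subtree V p v.
        \<phi> v' (\<phi> v w v') = restrict (\<phi> v w) (subtree V p v')))"
proof -
  interpret self_similar V r p tp Mor by (rule self_similar.intro) (rule assms)
  show ?thesis
    by (rule exI[of _ rigid]) (use rigid_mor rigid_compose rigid_restrict in blast)
qed

end
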